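(* Let $(X,d)$ be a bicomplete quasi-pseudometric space. Let $J:X\to X$ be a continuous single-valued map such that $r\,d(x,y)\le d(Jx,Jy)$ for all $x,y\in X$, for some constant $r>0$. Let $F:X\to CB(X)$ be a set-valued map such that $$H(Fx,Fy)\le \alpha\, d(Jx,Jy)\quad\text{for all }x,y\in X,$$ where $\alpha\in(0,1)$ and $r\alpha<1$. Then there exists a unique $x_0\in X$ which is both a startpoint and an endpoint of $J$ and $F$ if and only if $J$ and $F$ have the approximate mix-point property.
   Context: A quasi-pseudometric on a nonempty set $X$ is a map $d:X\times X\to[0,\infty)$ with $d(x,x)=0$ and $d(x,z)\le d(x,y)+d(y,z)$ for all $x,y,z$; it is $T_0$ if $d(x,y)=0=d(y,x)$ implies $x=y$. Write $d^s(x,y)=\max\{d(x,y),d(y,x)\}$. The space $(X,d)$ is bicomplete if $d$ is $T_0$ and the metric $d^s$ is complete. For $x\in X$ and nonempty $A\subseteq X$: $d(x,A)=\inf_{a\in A}d(x,a)$, $d(A,x)=\inf_{a\in A}d(a,x)$. For nonempty $A,B\subseteq X$: $H(A,B)=\max\{\sup_{a\in A}d(a,B),\ \sup_{b\in B}d(A,b)\}$. $CB(X)$ denotes the family of nonempty $d^s$-bounded, $\tau(d^s)$-closed subsets of $X$; continuity of $J$ is with respect to $\tau(d^s)$. For $J:X\to X$ and $F:X\to 2^X$, a point $x$ is a startpoint of $J$ and $F$ if $H(\{Jx\},Fx)=0$ and an endpoint of $J$ and $F$ if $H(Fx,\{Jx\})=0$. $J$ and $F$ have the approximate mix-point property if $\inf_{x\in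 X}\sup_{y\in Fx}d^s(Jx,y)=0$. *)

theory Defs
  imports Main "HOL.Real"
begin

definition quasi_pseudometric :: "('a \<Rightarrow> 'a \<Rightarrow> real) \<Rightarrow> bool" where
  "quasi_pseudometric d \<longleftrightarrow> (\<forall>x y. 0 \<le> d x y) \<and> (\<forall>x. d x x = 0) \<and>
     (\<forall>x y z. d x z \<le> d x y + d y z)"

definition T0_qpm :: "('a \<Rightarrow> 'a \<Rightarrow> real) \<Rightarrow> bool" where
  "T0_qpm d \<longleftrightarrow> (\<forall>x y. d x y = 0 \<and> d y x = 0 \<longrightarrow> x = y)"

definition sym_dist :: "('a \<Rightarrow> 'a \<Rightarrow> real) \<Rightarrow> 'a \<Rightarrow> 'a \<Rightarrow> real" where
  "sym_dist d x y = max (d x y) (d y x)"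

definition ds_cauchy :: "('a \<Rightarrow> 'a \<Rightarrow> real) \<Rightarrow> (nat \<Rightarrow> 'a) \<Rightarrow> bool" where
  "ds_cauchy d s \<longleftrightarrow> (\<forall>e>0. \<exists>N. \<forall>m\<ge>N. \<forall>n\<ge>N. sym_dist d (s m) (s n) < e)"

definition ds_converges :: "('a \<Rightarrow> 'a \<Rightarrow> real) \<Rightarrow> (nat \<Rightarrow> 'a) \<Rightarrow> 'a \<Rightarrow> bool" where
  "ds_converges d s x \<longleftrightarrow> (\<forall>e>0. \<exists>N. \<forall>n\<ge>N. sym_dist d (s n) x < e)"

definition bicomplete :: "('a \<Rightarrow> 'a \<Rightarrow> real) \<Rightarrow> bool" where
  "bicomplete d \<longleftrightarrow> quasi_pseudometric d \<and> T0_qpm d \<and>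
     (\<forall>s. ds_cauchy d s \<longrightarrow> (\<exists>x. ds_converges d s x))"

definition ds_open :: "('a \<Rightarrow> 'a \<Rightarrow> real) \<Rightarrow> 'a set \<Rightarrow> bool" where
  "ds_open d U \<longleftrightarrow> (\<forall>x\<in>U. \<exists>e>0. \<forall>y. sym_dist d x y < e \<longrightarrow> y \<in> U)"

definition ds_closed :: "('a \<Rightarrow> 'a \<Rightarrow> real) \<Rightarrow> 'a set \<Rightarrow> bool" where
  "ds_closed d A \<longleftrightarrow> ds_open d (- A)"

definition ds_bounded :: "('a \<Rightarrow> 'a \<Rightarrow> real) \<Rightarrow> 'a set \<Rightarrow> bool" where
  "ds_bounded d A \<longleftrightarrow> (\<exists>R. \<forall>a\<in>A. \<forall>b\<in>A. sym_dist d a b \<le> R)"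

definition CB :: "('a \<Rightarrow> 'a \<Rightarrow> real) \<Rightarrow> 'a set set" where
  "CB d = {A. A \<noteq> {} \<and> ds_bounded d A \<and> ds_closed d A}"

definition ds_continuous :: "('a \<Rightarrow> 'a \<Rightarrow> real) \<Rightarrow> ('a \<Rightarrow> 'a) \<Rightarrow> bool" where
  "ds_continuous d J \<longleftrightarrow> (\<forall>U. ds_open d U \<longrightarrow> ds_open d (J -` U))"

definition dist_pt_set :: "('a \<Rightarrow> 'a \<Rightarrow> real) \<Rightarrow> 'a \<Rightarrow> 'a set \<Rightarrow> real" where
  "dist_pt_set d x A = (INF a\<in>A. d x a)"

definition dist_set_pt :: "('a \<Rightarrow> 'a \<Rightarrow> real) \<Rightarrow> 'a set \<Rightarrow> 'a \<Rightarrow> real" where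
  "dist_set_pt d A x = (INF a\<in>A. d a x)"

definition Hqpm :: "('a \<Rightarrow> 'a \<Rightarrow> real) \<Rightarrow> 'a set \<Rightarrow> 'a set \<Rightarrow> real" where
  "Hqpm d A B = max (SUP a\<in>A. dist_pt_set d a B) (SUP b\<in>B. dist_set_pt d A b)"

definition startpoint :: "('a \<Rightarrow> 'a \<Rightarrow> real) \<Rightarrow> ('a \<Rightarrow> 'a) \<Rightarrow> ('a \<Rightarrow> 'a set) \<Rightarrow> 'a \<Rightarrow> bool" where
  "startpoint d J F x \<longleftrightarrow> Hqpm d {J x} (F x) = 0"

definition endpoint :: "('a \<Rightarrow> 'a \<Rightarrow> real) \<Rightarrow> ('a \<Rightarrow> 'a) \<Rightarrow> ('a \<Rightarrow> 'a set) \<Rightarrow> 'a \<Rightarrow> bool" where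
  "endpoint d J F x \<longleftrightarrow> Hqpm d (F x) {J x} = 0"

definition approx_mix_point :: "('a \<Rightarrow> 'a \<Rightarrow> real) \<Rightarrow> ('a \<Rightarrow> 'a) \<Rightarrow> ('a \<Rightarrow> 'a set) \<Rightarrow> bool" where
  "approx_mix_point d J F \<longleftrightarrow> (INF x. SUP y\<in>F x. sym_dist d (J x) y) = 0"

end

theory Submission
  imports Defs Complex_Main
begin

text \<open>Write m(x) = sup {d^s(J x, y) | y \<in> F x}. Routing d(J x, J x') through a point of F x and
  a point of F x' and using H(F x, F x') \<le> \<alpha> d(J x, J x') gives (1 - \<alpha>) d^s(J x, J x') \<le> m(x) + m(x').
  Hence along a sequence with m(x_n) \<rightarrow> 0 the points J x_n, and by r d(x, y) \<le> d(J x, J y) also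
  the x_n, form a d^s-Cauchy sequence. At its limit x, continuity of J and the estimate
  m(x) \<le> 2 d^s(J x, J x_n) + m(x_n) give m(x) = 0, i.e. F x = {J x}, which by T0 is exactly being
  a startpoint and an endpoint. The first estimate also shows that two such points have the same
  image under J, hence coincide.\<close>

locale qpm_space =
  fixes d :: "'a \<Rightarrow> 'a \<Rightarrow> real"
  assumes quasi_pseudometric: "quasi_pseudometric d"
begin

lemma nonneg: "0 \<le> d x y"
  and self_eq_0 [simp]: "d x x = 0"
  using quasi_pseudometric unfolding quasi_pseudometric_def by blast+

lemma triangle: "d x z \<le> d x y + d y z"
  using quasi_pseudometric unfolding quasi_pseudometric_def by blast

lemma sym_dist_commute: "sym_dist d x y = sym_dist d y x"
  by (simp add: sym_dist_def max.commute)

lemma le_sym_dist: "d x y \<le> sym_dist d x y" "d x y \<le> sym_dist d y x"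
  by (simp_all add: sym_dist_def)

lemma sym_dist_nonneg: "0 \<le> sym_dist d x y"
  using nonneg le_sym_dist order_trans by blast

lemma sym_dist_self [simp]: "sym_dist d x x = 0"
  by (simp add: sym_dist_def)

lemma sym_dist_triangle: "sym_dist d x z \<le> sym_dist d x y + sym_dist d y z"
proof -
  have "d x z \<le> d x y + d y z" "d z x \<le> d z y + d y x"
    by (rule triangle)+
  then have "d x z \<le> sym_dist d x y + sym_dist d y z" "d z x \<le> sym_dist d x y + sym_dist d y z"
    using le_sym_dist[of x y] le_sym_dist[of y z] le_sym_dist[of z y] le_sym_dist[of y x] by linarith+
  then show ?thesis by (simp add: sym_dist_def)
qed

lemma sym_dist_eq_0_iff:
  assumes "T0_qpm d"
  shows "sym_dist d x y = 0 \<longleftrightarrow> x = y"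
  using assms nonneg[of x y] nonneg[of y x]
  by (auto simp: sym_dist_def T0_qpm_def max_def split: if_splits)

lemma ds_bounded_dist_le:
  assumes "ds_bounded d A"
  obtains R where "\<And>x y. x \<in> A \<Longrightarrow> y \<in> A \<Longrightarrow> d x y \<le> R"
  using assms le_sym_dist order_trans unfolding ds_bounded_def by meson

lemma Hqpm_approx_right:
  assumes "ds_bounded d A" "a \<in> A" "B \<noteq> {}" "e > 0"
  shows "\<exists>b\<in>B. d a b < Hqpm d A B + e"
proof -
  obtain R where R: "\<And>x. x \<in> A \<Longrightarrow> d x a \<le> R"
    using ds_bounded_dist_le[OF assms(1)] assms(2) by metis
  obtain b0 where b0: "b0 \<in> B" using assms(3) by blast
  have bdd_B: "bdd_below ((\<lambda>b. d x b) ` B)" for x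
    by (intro bdd_belowI2) (rule nonneg)
  have "dist_pt_set d x B \<le> R + d a b0" if "x \<in> A" for x
  proof -
    have "dist_pt_set d x B \<le> d x b0"
      unfolding dist_pt_set_def using cINF_lower[OF bdd_B b0] .
    also have "\<dots> \<le> R + d a b0" using triangle[where x=x and y=a and z=b0] R[OF that] by linarith
    finally show ?thesis .
  qed
  then have "bdd_above ((\<lambda>x. dist_pt_set d x B) ` A)" by (meson bdd_aboveI2)
  then have "dist_pt_set d a B \<le> Hqpm d A B"
    unfolding Hqpm_def using cSUP_upper[OF assms(2)] by fastforce
  then have "(INF b\<in>B. d a b) < Hqpm d A B + e"
    using assms(4) unfolding dist_pt_set_def by linarith
  then show ?thesis using cINF_less_iff[OF assms(3) bdd_B] by blast
qed

lemma Hqpm_approx_left: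
  assumes "ds_bounded d B" "b \<in> B" "A \<noteq> {}" "e > 0"
  shows "\<exists>a\<in>A. d a b < Hqpm d A B + e"
proof -
  obtain R where R: "\<And>x. x \<in> B \<Longrightarrow> d b x \<le> R"
    using ds_bounded_dist_le[OF assms(1)] assms(2) by metis
  obtain a0 where a0: "a0 \<in> A" using assms(3) by blast
  have bdd_A: "bdd_below ((\<lambda>a. d a x) ` A)" for x
    by (intro bdd_belowI2) (rule nonneg)
  have "dist_set_pt d A x \<le> d a0 b + R" if "x \<in> B" for x
  proof -
    have "dist_set_pt d A x \<le> d a0 x"
      unfolding dist_set_pt_def using cINF_lower[OF bdd_A a0] .
    also have "\<dots> \<le> d a0 b + R" using triangle[where x=a0 and y=b and z=x] R[OF that] by linarith
    finally show ?thesis .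
  qed
  then have "bdd_above ((\<lambda>x. dist_set_pt d A x) ` B)" by (meson bdd_aboveI2)
  then have "dist_set_pt d A b \<le> Hqpm d A B"
    unfolding Hqpm_def using cSUP_upper[OF assms(2)] by fastforce
  then have "(INF a\<in>A. d a b) < Hqpm d A B + e"
    using assms(4) unfolding dist_set_pt_def by linarith
  then show ?thesis using cINF_less_iff[OF assms(3) bdd_A] by blast
qed

lemma dist_le_Hqpm_singleton:
  assumes "ds_bounded d B" "b \<in> B"
  shows "d p b \<le> Hqpm d {p} B" "d b p \<le> Hqpm d B {p}"
proof -
  show "d p b \<le> Hqpm d {p} B"
    using Hqpm_approx_left[OF assms, of "{p}"] by (auto intro: field_le_epsilon less_imp_le)
  show "d b p \<le> Hqpm d B {p}"
    using Hqpm_approx_right[OF assms, of "{p}"] by (auto intro: field_le_epsilon less_imp_le)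
qed

lemma Hqpm_singletons [simp]: "Hqpm d {x} {y} = d x y"
  by (simp add: Hqpm_def dist_pt_set_def dist_set_pt_def)

lemma ds_converges_iff_tendsto: "ds_converges d s x \<longleftrightarrow> (\<lambda>n. sym_dist d (s n) x) \<longlonglongrightarrow> 0"
  by (simp add: ds_converges_def lim_sequentially dist_real_def abs_of_nonneg sym_dist_nonneg)

lemma ds_open_ball: "ds_open d {y. sym_dist d p y < e}"
  unfolding ds_open_def
proof (intro ballI)
  fix y assume "y \<in> {y. sym_dist d p y < e}"
  then have "e - sym_dist d p y > 0" by simp
  moreover have "sym_dist d p z < e" if "sym_dist d y z < e - sym_dist d p y" for z
    using that sym_dist_triangle[where x=p and y=y and z=z] by linarith
  ultimately show "\<exists>\<delta>>0. \<forall>z. sym_dist d y z < \<delta> \<longrightarrow> z \<in> {y. sym_dist d p y < e}"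
    by blast
qed

lemma ds_continuous_converges:
  assumes "ds_continuous d J" "ds_converges d s x"
  shows "ds_converges d (\<lambda>n. J (s n)) (J x)"
  unfolding ds_converges_def
proof (intro allI impI)
  fix e :: real assume "e > 0"
  then have "x \<in> J -` {y. sym_dist d (J x) y < e}" by simp
  moreover have "ds_open d (J -` {y. sym_dist d (J x) y < e})"
    using assms(1) ds_open_ball unfolding ds_continuous_def by blast
  ultimately obtain \<delta> where "\<delta> > 0" and \<delta>: "\<And>y. sym_dist d x y < \<delta> \<Longrightarrow> sym_dist d (J x) (J y) < e"
    unfolding ds_open_def by blast
  then obtain N where "\<forall>n\<ge>N. sym_dist d (s n) x < \<delta>"
    using assms(2) unfolding ds_converges_def by blast
  then show "\<exists>N. \<forall>n\<ge>N. sym_dist d (J (s n)) (J x) < e"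
    using \<delta> sym_dist_commute by metis
qed

end

lemma sym_dist_expansive:
  assumes "\<forall>x y. r * d x y \<le> d (f x) (f y)"
  shows "r * sym_dist d x y \<le> sym_dist d (f x) (f y)"
  using assms[rule_format, of x y] assms[rule_format, of y x]
  unfolding sym_dist_def max_def by (cases "d x y \<le> d y x") auto

lemma ds_cauchyI:
  assumes bound: "\<And>m n. sym_dist d (t m) (t n) \<le> c m + c n" and c: "c \<longlonglongrightarrow> 0"
  shows "ds_cauchy d t"
  unfolding ds_cauchy_def
proof (intro allI impI)
  fix e :: real assume "e > 0"
  then obtain N where N: "\<And>n. n \<ge> N \<Longrightarrow> \<bar>c n\<bar> < e / 2"
    using c unfolding lim_sequentially dist_real_def by (metis diff_zero half_gt_zero)
  have "sym_dist d (t m) (t n) < e" if "m \<ge> N" "n \<ge> N" for m n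
    using bound[of m n] N[OF that(1)] N[OF that(2)] by linarith
  then show "\<exists>N. \<forall>m\<ge>N. \<forall>n\<ge>N. sym_dist d (t m) (t n) < e" by blast
qed

locale set_contraction = qpm_space d for d :: "'a \<Rightarrow> 'a \<Rightarrow> real" +
  fixes J :: "'a \<Rightarrow> 'a" and F :: "'a \<Rightarrow> 'a set" and \<alpha> :: real
  assumes T0: "T0_qpm d"
    and F_CB: "F x \<in> CB d"
    and Hqpm_F_le: "Hqpm d (F x) (F y) \<le> \<alpha> * d (J x) (J y)"
    and \<alpha>_nonneg: "0 \<le> \<alpha>" and \<alpha>_less_1: "\<alpha> < 1"
begin

definition mix_defect :: "'a \<Rightarrow> real" where
  "mix_defect x = (SUP y\<in>F x. sym_dist d (J x) y)"

lemma F_nonempty: "F x \<noteq> {}" and F_bounded: "ds_bounded d (F x)"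
  using F_CB[of x] by (simp_all add: CB_def)

lemma mix_defect_le_iff: "mix_defect x \<le> t \<longleftrightarrow> (\<forall>y\<in>F x. sym_dist d (J x) y \<le> t)"
proof -
  obtain y0 where y0: "y0 \<in> F x" using F_nonempty by blast
  obtain R where R: "\<And>y z. y \<in> F x \<Longrightarrow> z \<in> F x \<Longrightarrow> sym_dist d y z \<le> R"
    using F_bounded[of x] unfolding ds_bounded_def by blast
  have "sym_dist d (J x) y \<le> sym_dist d (J x) y0 + R" if "y \<in> F x" for y
    using sym_dist_triangle[where x="J x" and y=y0 and z=y] R[OF y0 that] by linarith
  then have "bdd_above ((\<lambda>y. sym_dist d (J x) y) ` F x)" by (meson bdd_aboveI2)
  then show ?thesis unfolding mix_defect_def using cSUP_le_iff[OF F_nonempty] by blast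
qed

lemma sym_dist_le_mix_defect: "y \<in> F x \<Longrightarrow> sym_dist d (J x) y \<le> mix_defect x"
  using mix_defect_le_iff by blast

lemma mix_defect_nonneg: "0 \<le> mix_defect x"
  using F_nonempty sym_dist_le_mix_defect sym_dist_nonneg order_trans by blast

lemma mix_defect_eq_0_iff: "mix_defect x = 0 \<longleftrightarrow> F x = {J x}"
proof
  assume "mix_defect x = 0"
  then have "y = J x" if "y \<in> F x" for y
    using sym_dist_le_mix_defect[OF that] sym_dist_nonneg[of "J x" y]
      sym_dist_eq_0_iff[OF T0, of "J x" y] by simp
  then show "F x = {J x}" using F_nonempty by blast
qed (simp add: mix_defect_def)

lemma startpoint_endpoint_iff: "startpoint d J F x \<and> endpoint d J F x \<longleftrightarrow> F x = {J x}"
proof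
  assume "startpoint d J F x \<and> endpoint d J F x"
  then have "d (J x) y \<le> 0" "d y (J x) \<le> 0" if "y \<in> F x" for y
    using dist_le_Hqpm_singleton[OF F_bounded that, of "J x"]
    unfolding startpoint_def endpoint_def by auto
  then have "mix_defect x \<le> 0" by (simp add: mix_defect_le_iff sym_dist_def)
  then show "F x = {J x}"
    using mix_defect_nonneg[of x] mix_defect_eq_0_iff[of x] by (simp add: order_antisym)
qed (simp add: startpoint_def endpoint_def)

lemma scaled_dist_le: "\<alpha> * d x y \<le> d x y"
  using \<alpha>_nonneg \<alpha>_less_1 nonneg by (simp add: mult_left_le_one_le)

lemma dist_J_le_mix_defect: "(1 - \<alpha>) * d (J x) (J x') \<le> mix_defect x + mix_defect x'"
proof -
  obtain y where y: "y \<in> F x" using F_nonempty by blast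
  have "d (J x) (J x') \<le> mix_defect x + \<alpha> * d (J x) (J x') + mix_defect x' + e" if "e > 0" for e
  proof -
    obtain z where z: "z \<in> F x'" and "d y z < Hqpm d (F x) (F x') + e"
      using Hqpm_approx_right[OF F_bounded y F_nonempty \<open>e > 0\<close>] by blast
    then have "d y z < \<alpha> * d (J x) (J x') + e" using Hqpm_F_le[of x x'] by linarith
    moreover have "d (J x) (J x') \<le> d (J x) y + d y z + d z (J x')"
      using triangle[where x="J x" and y=y and z="J x'"] triangle[where x=y and y=z and z="J x'"]
      by linarith
    moreover have "d (J x) y \<le> mix_defect x" "d z (J x') \<le> mix_defect x'"
      using sym_dist_le_mix_defect[OF y] sym_dist_le_mix_defect[OF z] le_sym_dist order_trans
      by (metis sym_dist_commute)+
    ultimately show ?thesis by linarith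
  qed
  then show ?thesis by (auto intro: field_le_epsilon simp: algebra_simps)
qed

lemma sym_dist_J_le_mix_defect:
  "(1 - \<alpha>) * sym_dist d (J x) (J x') \<le> mix_defect x + mix_defect x'"
  using dist_J_le_mix_defect[of x x'] dist_J_le_mix_defect[of x' x] \<alpha>_less_1
  by (simp add: sym_dist_def max_mult_distrib_left)

lemma mix_defect_le: "mix_defect x \<le> 2 * sym_dist d (J x) (J x') + mix_defect x'"
  unfolding mix_defect_le_iff
proof
  fix b assume b: "b \<in> F x"
  let ?\<rho> = "sym_dist d (J x) (J x')"
  have "d (J x) b \<le> 2 * ?\<rho> + mix_defect x' + e" if "e > 0" for e
  proof -
    obtain y where y: "y \<in> F x'" and "d y b < Hqpm d (F x') (F x) + e"
      using Hqpm_approx_left[OF F_bounded b F_nonempty \<open>e > 0\<close>] by blast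
    then have "d y b < ?\<rho> + e"
      using Hqpm_F_le[of x' x] scaled_dist_le[of "J x'" "J x"] le_sym_dist[of "J x'" "J x"] by linarith
    moreover have "d (J x) b \<le> d (J x) (J x') + d (J x') y + d y b"
      using triangle[where x="J x" and y="J x'" and z=b] triangle[where x="J x'" and y=y and z=b]
      by linarith
    moreover have "d (J x') y \<le> mix_defect x'"
      using sym_dist_le_mix_defect[OF y] le_sym_dist order_trans by blast
    ultimately show ?thesis using le_sym_dist[of "J x" "J x'"] by linarith
  qed
  moreover have "d b (J x) \<le> 2 * ?\<rho> + mix_defect x' + e" if "e > 0" for e
  proof -
    obtain z where z: "z \<in> F x'" and "d b z < Hqpm d (F x) (F x') + e"
      using Hqpm_approx_right[OF F_bounded b F_nonempty \<open>e > 0\<close>] by blast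
    then have "d b z < ?\<rho> + e"
      using Hqpm_F_le[of x x'] scaled_dist_le[of "J x" "J x'"] le_sym_dist[of "J x" "J x'"] by linarith
    moreover have "d b (J x) \<le> d b z + d z (J x') + d (J x') (J x)"
      using triangle[where x=b and y=z and z="J x"] triangle[where x=z and y="J x'" and z="J x"]
      by linarith
    moreover have "d z (J x') \<le> mix_defect x'"
      using sym_dist_le_mix_defect[OF z] le_sym_dist sym_dist_commute order_trans by metis
    ultimately show ?thesis using le_sym_dist[of "J x'" "J x"] by linarith
  qed
  ultimately show "sym_dist d (J x) b \<le> 2 * ?\<rho> + mix_defect x'"
    unfolding sym_dist_def by (auto intro: field_le_epsilon)
qed

lemma coincidence_unique:
  assumes "\<forall>x y. r * d x y \<le> d (J x) (J y)" "r > 0"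
    and "F x = {J x}" "F y = {J y}"
  shows "x = y"
proof -
  have "mix_defect x = 0" "mix_defect y = 0"
    using assms(3,4) mix_defect_eq_0_iff by blast+
  then have "(1 - \<alpha>) * sym_dist d (J x) (J y) \<le> 0"
    using sym_dist_J_le_mix_defect[of x y] by simp
  then have "sym_dist d (J x) (J y) \<le> 0"
    using \<alpha>_less_1 by (simp add: mult_le_0_iff)
  then have "r * sym_dist d x y \<le> 0"
    using sym_dist_expansive[OF assms(1)] order_trans by blast
  then have "sym_dist d x y = 0"
    using \<open>r > 0\<close> sym_dist_nonneg[of x y] by (simp add: mult_le_0_iff order_antisym)
  then show ?thesis using sym_dist_eq_0_iff[OF T0] by blast
qed

lemma approx_mix_point_iff: "approx_mix_point d J F \<longleftrightarrow> (\<forall>e>0. \<exists>x. mix_defect x < e)"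
proof -
  have bdd: "bdd_below (range mix_defect)"
    using mix_defect_nonneg by (meson bdd_belowI2)
  have "approx_mix_point d J F \<longleftrightarrow> (INF x. mix_defect x) = 0"
    by (simp add: approx_mix_point_def mix_defect_def)
  also have "\<dots> \<longleftrightarrow> (\<forall>e>0. (INF x. mix_defect x) < e)"
    using cINF_greatest[of UNIV 0 mix_defect] mix_defect_nonneg
    by (metis UNIV_not_empty dual_order.antisym not_le_imp_less order_refl field_le_epsilon
        add.left_neutral less_imp_le)
  also have "\<dots> \<longleftrightarrow> (\<forall>e>0. \<exists>x. mix_defect x < e)"
    using cINF_less_iff[OF UNIV_not_empty bdd] by simp
  finally show ?thesis .
qed

lemma mix_defect_sequence:
  assumes "approx_mix_point d J F"
  obtains s where "(\<lambda>n. mix_defect (s n)) \<longlonglongrightarrow> 0"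
proof -
  have "\<forall>n. \<exists>x. mix_defect x < inverse (real (Suc n))"
    using assms unfolding approx_mix_point_iff by simp
  then obtain s where s: "\<And>n. mix_defect (s n) < inverse (real (Suc n))"
    by metis
  have "(\<lambda>n. mix_defect (s n)) \<longlonglongrightarrow> 0"
  proof (rule real_tendsto_sandwich[OF _ _ tendsto_const LIMSEQ_inverse_real_of_nat])
    show "\<forall>\<^sub>F n in sequentially. 0 \<le> mix_defect (s n)"
      by (simp add: mix_defect_nonneg)
    show "\<forall>\<^sub>F n in sequentially. mix_defect (s n) \<le> inverse (real (Suc n))"
      by (intro always_eventually allI less_imp_le s)
  qed
  then show thesis by (rule that)
qed

lemma coincidence_exists:
  assumes complete: "\<forall>s. ds_cauchy d s \<longrightarrow> (\<exists>x. ds_converges d s x)"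
    and cont: "ds_continuous d J"
    and expansive: "\<forall>x y. r * d x y \<le> d (J x) (J y)" and "r > 0"
    and "approx_mix_point d J F"
  shows "\<exists>x. F x = {J x}"
proof -
  obtain s where s: "(\<lambda>n. mix_defect (s n)) \<longlonglongrightarrow> 0"
    using mix_defect_sequence \<open>approx_mix_point d J F\<close> by blast
  define c where "c n = mix_defect (s n) / ((1 - \<alpha>) * r)" for n
  have "ds_cauchy d s"
  proof (rule ds_cauchyI)
    fix m n
    have "(1 - \<alpha>) * r * sym_dist d (s m) (s n) \<le> (1 - \<alpha>) * sym_dist d (J (s m)) (J (s n))"
      using sym_dist_expansive[OF expansive] \<alpha>_less_1 by (simp add: mult.assoc)
    also have "\<dots> \<le> mix_defect (s m) + mix_defect (s n)"
      by (rule sym_dist_J_le_mix_defect)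
    finally have "sym_dist d (s m) (s n) \<le> (mix_defect (s m) + mix_defect (s n)) / ((1 - \<alpha>) * r)"
      using \<alpha>_less_1 \<open>r > 0\<close> by (simp add: pos_le_divide_eq mult.commute)
    then show "sym_dist d (s m) (s n) \<le> c m + c n"
      by (simp add: c_def add_divide_distrib)
  next
    show "c \<longlonglongrightarrow> 0" unfolding c_def using s by (rule tendsto_divide_zero)
  qed
  then obtain x where "ds_converges d s x" using complete by blast
  then have "ds_converges d (\<lambda>n. J (s n)) (J x)" by (rule ds_continuous_converges[OF cont])
  then have "(\<lambda>n. sym_dist d (J (s n)) (J x)) \<longlonglongrightarrow> 0" by (simp only: ds_converges_iff_tendsto)
  then have "(\<lambda>n. 2 * sym_dist d (J (s n)) (J x) + mix_defect (s n)) \<longlonglongrightarrow> 0"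
    using tendsto_add[OF tendsto_mult_right_zero s] by simp
  moreover have "\<forall>\<^sub>F n in sequentially. mix_defect x \<le> 2 * sym_dist d (J (s n)) (J x) + mix_defect (s n)"
    using mix_defect_le sym_dist_commute by (intro always_eventually allI) metis
  ultimately have "mix_defect x \<le> 0"
    by (rule tendsto_le[OF trivial_limit_sequentially _ tendsto_const])
  then show ?thesis
    using mix_defect_nonneg[of x] mix_defect_eq_0_iff[of x] by (auto simp: order_antisym)
qed

end

theorem mainTheorem4:
  fixes d :: "'a \<Rightarrow> 'a \<Rightarrow> real" and J :: "'a \<Rightarrow> 'a" and F :: "'a \<Rightarrow> 'a set"
    and r \<alpha> :: real
  assumes "bicomplete d"
    and "ds_continuous d J"
    and "r > 0"
    and "\<forall>x y. r * d x y \<le> d (J x) (J y)"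
    and "\<forall>x. F x \<in> CB d"
    and "\<forall>x y. Hqpm d (F x) (F y) \<le> \<alpha> * d (J x) (J y)"
    and "0 < \<alpha>" and "\<alpha> < 1" and "r * \<alpha> < 1"
  shows "(\<exists>!x0. startpoint d J F x0 \<and> endpoint d J F x0) \<longleftrightarrow> approx_mix_point d J F"
proof -
  have complete: "\<forall>s. ds_cauchy d s \<longrightarrow> (\<exists>x. ds_converges d s x)"
    using assms(1) by (simp add: bicomplete_def)
  interpret set_contraction d J F \<alpha>
    using assms(1,5-8) by unfold_locales (simp_all add: bicomplete_def)
  show ?thesis
  proof
    assume "\<exists>!x0. startpoint d J F x0 \<and> endpoint d J F x0"
    then obtain x0 where "F x0 = {J x0}" by (auto simp only: startpoint_endpoint_iff)
    then have "mix_defect x0 = 0" by (simp only: mix_defect_eq_0_iff)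
    then show "approx_mix_point d J F"
      unfolding approx_mix_point_iff by (intro allI impI exI[of _ x0]) simp
  next
    assume "approx_mix_point d J F"
    then obtain x where "F x = {J x}"
      using coincidence_exists[OF complete assms(2,4,3)] by blast
    moreover have "y = x" if "F y = {J y}" for y
      using coincidence_unique[OF assms(4,3) that \<open>F x = {J x}\<close>] .
    ultimately show "\<exists>!x0. startpoint d J F x0 \<and> endpoint d J F x0"
      unfolding startpoint_endpoint_iff by blast
  qed
qed

end
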